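(* Let $p\geq r$ and let $A$ be a nonnegative symmetric $r$-matrix of order $n$. If $A$ is regular, then $\eta^{(p)}(A)=n^{-r/p}\Sigma A$.
   Context: A cubical $r$-matrix of order $n$ is a function $A$ on $[n]^r$ with entries $a_{i_1,\ldots,i_r}$; symmetric means invariant under permutations of indices. $\Sigma B$ denotes the sum of all entries of a matrix $B$. $\eta^{(p)}(A)=\max\{|\sum a_{i_1,\ldots,i_r}x_{i_1}\cdots x_{i_r}|:\mathbf{x}\in\mathbb{R}^n,|\mathbf{x}|_p=1\}$. For $k\in[r]$, $s\in[n]$, the slice $A^{(k)}_s$ is the $(r-1)$-matrix obtained by fixing $i_k=s$. $A$ is regular if for every $k\in[r]$, $\Sigma A^{(k)}_1=\cdots=\Sigma A^{(k)}_n$. *)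

theory Defs
  imports Complex_Main "HOL-Combinatorics.Permutations"
begin

text \<open>A cubical r-matrix of order n is a real function on index tuples; we use lists
  of length r with entries in {0..<n} (i.e. [n] is represented as {0..<n}).
  Values of A on other lists are irrelevant.\<close>

definition tuples :: "nat \<Rightarrow> nat \<Rightarrow> nat list set" where
  "tuples r n = {is. length is = r \<and> set is \<subseteq> {..<n}}"

definition msum :: "nat \<Rightarrow> nat \<Rightarrow> (nat list \<Rightarrow> real) \<Rightarrow> real" where
  "msum r n A = (\<Sum>is\<in>tuples r n. A is)"

definition symmetric_matrix :: "nat \<Rightarrow> nat \<Rightarrow> (nat list \<Rightarrow> real) \<Rightarrow> bool" where
  "symmetric_matrix r n A \<longleftrightarrow>
     (\<forall>is\<in>tuples r n. \<forall>\<sigma>. \<sigma> permutes {..<r} \<longrightarrow> A (map (\<lambda>k. is ! \<sigma> k) [0..<r]) = A is)"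

definition nonneg_matrix :: "nat \<Rightarrow> nat \<Rightarrow> (nat list \<Rightarrow> real) \<Rightarrow> bool" where
  "nonneg_matrix r n A \<longleftrightarrow> (\<forall>is\<in>tuples r n. 0 \<le> A is)"

definition slice_sum :: "nat \<Rightarrow> nat \<Rightarrow> (nat list \<Rightarrow> real) \<Rightarrow> nat \<Rightarrow> nat \<Rightarrow> real" where
  "slice_sum r n A k s = (\<Sum>is\<in>{is\<in>tuples r n. is ! k = s}. A is)"

definition regular_matrix :: "nat \<Rightarrow> nat \<Rightarrow> (nat list \<Rightarrow> real) \<Rightarrow> bool" where
  "regular_matrix r n A \<longleftrightarrow>
     (\<forall>k<r. \<forall>s<n. \<forall>t<n. slice_sum r n A k s = slice_sum r n A k t)"

definition pnorm :: "real \<Rightarrow> nat \<Rightarrow> (nat \<Rightarrow> real) \<Rightarrow> real" where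
  "pnorm p n x = (\<Sum>i<n. \<bar>x i\<bar> powr p) powr (1 / p)"

definition form :: "nat \<Rightarrow> nat \<Rightarrow> (nat list \<Rightarrow> real) \<Rightarrow> (nat \<Rightarrow> real) \<Rightarrow> real" where
  "form r n A x = (\<Sum>is\<in>tuples r n. A is * (\<Prod>k<r. x (is ! k)))"

text \<open>eta^(p)(A): the maximum (here: supremum, which is attained) of |form| over the p-unit sphere.\<close>
definition eta :: "real \<Rightarrow> nat \<Rightarrow> nat \<Rightarrow> (nat list \<Rightarrow> real) \<Rightarrow> real" where
  "eta p r n A = Sup {\<bar>form r n A x\<bar> | x. pnorm p n x = 1}"

end

theory Submission
  imports Defs "HOL-Analysis.Analysis"
begin

text \<open>The constant vector with entries \<open>n powr (-1/p)\<close> has unit p-norm and attains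
  \<open>n powr (-r/p) * \<Sigma>A\<close>. Conversely, for a unit vector x we may assume \<open>x \<ge> 0\<close>; AM-GM bounds
  each monomial \<open>x\<^sub>i\<^sub>1\<cdots>x\<^sub>i\<^sub>r\<close> by the mean of \<open>x\<^sub>i\<^sub>k\<^sup>r\<close>, and regularity (every slice sum equals
  \<open>\<Sigma>A/n\<close>) collapses the resulting sum to \<open>\<Sigma>A/n \<cdot> \<Sum>\<^sub>i x\<^sub>i\<^sup>r\<close>. Since \<open>p/r \<ge> 1\<close>, the power-mean
  inequality gives \<open>\<Sum>\<^sub>i x\<^sub>i\<^sup>r \<le> n powr (1 - r/p)\<close>.\<close>

lemma finite_tuples: "finite (tuples r n)"
  unfolding tuples_def using finite_lists_length_eq[of "{..<n}" r] by (simp add: conj_commute)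

lemma nth_tuples_less: "is \<in> tuples r n \<Longrightarrow> k < r \<Longrightarrow> is ! k < n"
  unfolding tuples_def by (auto dest: nth_mem)

lemma msum_nonneg: "nonneg_matrix r n A \<Longrightarrow> 0 \<le> msum r n A"
  unfolding msum_def nonneg_matrix_def by (simp add: sum_nonneg)

lemma sum_tuples_nth:
  assumes "k < r"
  shows "(\<Sum>is\<in>tuples r n. A is * f (is ! k)) = (\<Sum>s<n. f s * slice_sum r n A k s)"
proof -
  have "(\<Sum>is\<in>tuples r n. A is * f (is ! k)) =
        (\<Sum>s<n. \<Sum>is\<in>{is\<in>tuples r n. is ! k = s}. A is * f (is ! k))"
    by (rule sum.group[symmetric]) (use finite_tuples nth_tuples_less assms in auto)
  also have "\<dots> = (\<Sum>s<n. f s * slice_sum r n A k s)"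
    unfolding slice_sum_def sum_distrib_left by (intro sum.cong refl) (auto simp: mult.commute)
  finally show ?thesis .
qed

lemma slice_sum_regular:
  assumes "regular_matrix r n A" "k < r" "s < n"
  shows "slice_sum r n A k s = msum r n A / n"
proof -
  have "msum r n A = (\<Sum>t<n. slice_sum r n A k t)"
    using sum_tuples_nth[OF assms(2), of A "\<lambda>_. 1"] by (simp add: msum_def)
  also have "\<dots> = (\<Sum>t<n. slice_sum r n A k s)"
  proof (rule sum.cong[OF refl])
    fix t assume "t \<in> {..<n}"
    then show "slice_sum r n A k t = slice_sum r n A k s"
      using assms unfolding regular_matrix_def by blast
  qed
  also have "\<dots> = n * slice_sum r n A k s"
    by simp
  finally show ?thesis using assms(3) by simp
qed

lemma prod_le_mean_power_card:
  fixes y :: "'a \<Rightarrow> real"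
  assumes "finite K" "K \<noteq> {}" "\<And>k. k \<in> K \<Longrightarrow> 0 \<le> y k"
  shows "(\<Prod>k\<in>K. y k) \<le> (\<Sum>k\<in>K. y k ^ card K) / card K"
proof -
  have prod_ge_0: "0 \<le> (\<Prod>k\<in>K. y k)" using assms(3) by (simp add: prod_nonneg)
  have card_pos: "0 < card K" using assms(1,2) by (simp add: card_gt_0_iff)
  have "(\<Prod>k\<in>K. y k) = ((\<Prod>k\<in>K. y k) powr card K) powr (1 / card K)"
    using prod_ge_0 card_pos by (simp add: powr_powr)
  also have "\<dots> = (\<Prod>k\<in>K. y k ^ card K) powr (1 / card K)"
    using prod_ge_0 card_pos by (simp add: powr_realpow' prod_power_distrib)
  also have "\<dots> \<le> (\<Sum>k\<in>K. y k ^ card K / card K)"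
    by (rule arith_geom_mean) (use assms in auto)
  finally show ?thesis by (simp add: sum_divide_distrib)
qed

lemma sum_le_card_powr_mult_sum_powr_positive:
  fixes u :: "'a \<Rightarrow> real"
  assumes "finite I" "I \<noteq> {}" "\<And>i. i \<in> I \<Longrightarrow> 0 < u i" "1 \<le> q"
  shows "(\<Sum>i\<in>I. u i) \<le> card I powr (1 - 1/q) * (\<Sum>i\<in>I. u i powr q) powr (1/q)"
proof -
  define m where "m = real (card I)"
  have m_pos: "0 < m" using assms(1,2) by (simp add: m_def card_gt_0_iff)
  have mean_nonneg: "0 \<le> (\<Sum>i\<in>I. u i / m)"
    using assms(3) m_pos by (intro sum_nonneg) (simp add: less_imp_le)
  have "(\<Sum>i\<in>I. (1/m) *\<^sub>R u i) powr q \<le> (\<Sum>i\<in>I. (1/m) * u i powr q)"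
    by (rule convex_on_sum[OF assms(1,2) powr_convex[OF assms(4)]])
       (use assms(3) m_pos in \<open>auto simp: m_def\<close>)
  then have "(\<Sum>i\<in>I. u i / m) powr q \<le> (\<Sum>i\<in>I. u i powr q) / m"
    by (simp add: sum_divide_distrib sum_distrib_left[symmetric] divide_inverse mult.commute)
  then have "((\<Sum>i\<in>I. u i / m) powr q) powr (1/q) \<le> ((\<Sum>i\<in>I. u i powr q) / m) powr (1/q)"
    using assms(4) by (intro powr_mono2) auto
  then have "(\<Sum>i\<in>I. u i / m) \<le> ((\<Sum>i\<in>I. u i powr q) / m) powr (1/q)"
    using mean_nonneg assms(4) by (simp add: powr_powr)
  then have "m * (\<Sum>i\<in>I. u i / m) \<le> m * ((\<Sum>i\<in>I. u i powr q) / m) powr (1/q)"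
    using m_pos by simp
  also have "\<dots> = m powr (1 - 1/q) * (\<Sum>i\<in>I. u i powr q) powr (1/q)"
    using m_pos by (simp add: powr_divide powr_diff sum_nonneg)
  finally show ?thesis using m_pos by (simp add: m_def sum_divide_distrib[symmetric])
qed

lemma sum_le_card_powr_mult_sum_powr:
  fixes u :: "'a \<Rightarrow> real"
  assumes "finite I" "\<And>i. i \<in> I \<Longrightarrow> 0 \<le> u i" "1 \<le> q"
  shows "(\<Sum>i\<in>I. u i) \<le> card I powr (1 - 1/q) * (\<Sum>i\<in>I. u i powr q) powr (1/q)"
proof -
  define J where "J = {i\<in>I. 0 < u i}"
  have J: "finite J" "J \<subseteq> I" using assms(1) by (auto simp: J_def)
  have zero_off_J: "u i = 0" if "i \<in> I - J" for i
    using that assms(2) by (force simp: J_def)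
  have sum_J: "(\<Sum>i\<in>I. u i) = (\<Sum>i\<in>J. u i)"
    by (rule sum.mono_neutral_right[OF assms(1) J(2)]) (simp add: zero_off_J)
  have sum_powr_J: "(\<Sum>i\<in>I. u i powr q) = (\<Sum>i\<in>J. u i powr q)"
    by (rule sum.mono_neutral_right[OF assms(1) J(2)]) (simp add: zero_off_J)
  show ?thesis
  proof (cases "J = {}")
    case True
    then show ?thesis by (simp add: sum_J)
  next
    case False
    have "(\<Sum>i\<in>J. u i) \<le> card J powr (1 - 1/q) * (\<Sum>i\<in>J. u i powr q) powr (1/q)"
      by (rule sum_le_card_powr_mult_sum_powr_positive[OF J(1) False _ assms(3)]) (simp add: J_def)
    also have "\<dots> \<le> card I powr (1 - 1/q) * (\<Sum>i\<in>J. u i powr q) powr (1/q)"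
      using assms(1,3) J by (intro mult_right_mono powr_mono2) (auto intro: card_mono)
    finally show ?thesis by (simp add: sum_J sum_powr_J)
  qed
qed

lemma abs_form_le_form_abs:
  assumes "nonneg_matrix r n A"
  shows "\<bar>form r n A x\<bar> \<le> form r n A (\<lambda>i. \<bar>x i\<bar>)"
proof -
  have "\<bar>form r n A x\<bar> \<le> (\<Sum>is\<in>tuples r n. \<bar>A is * (\<Prod>k<r. x (is ! k))\<bar>)"
    unfolding form_def by (rule sum_abs)
  also have "\<dots> = form r n A (\<lambda>i. \<bar>x i\<bar>)"
    using assms unfolding form_def nonneg_matrix_def by (simp add: abs_mult abs_prod)
  finally show ?thesis .
qed

lemma form_le_msum_mult_sum_power:
  assumes "1 \<le> r" "nonneg_matrix r n A" "regular_matrix r n A" "\<And>i. 0 \<le> y i"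
  shows "form r n A y \<le> msum r n A / n * (\<Sum>s<n. y s ^ r)"
proof -
  have "form r n A y \<le> (\<Sum>is\<in>tuples r n. A is * ((\<Sum>k<r. y (is ! k) ^ r) / r))"
    unfolding form_def
  proof (rule sum_mono)
    fix "is" assume "is \<in> tuples r n"
    then have "0 \<le> A is" using assms(2) by (simp add: nonneg_matrix_def)
    moreover have "(\<Prod>k<r. y (is ! k)) \<le> (\<Sum>k<r. y (is ! k) ^ r) / r"
      using prod_le_mean_power_card[of "{..<r}" "\<lambda>k. y (is ! k)"] assms(1,4)
      by (simp add: lessThan_empty_iff)
    ultimately show "A is * (\<Prod>k<r. y (is ! k)) \<le> A is * ((\<Sum>k<r. y (is ! k) ^ r) / r)"
      by (rule mult_left_mono[rotated])
  qed
  also have "\<dots> = (\<Sum>k<r. \<Sum>is\<in>tuples r n. A is * y (is ! k) ^ r) / r"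
    by (simp add: sum_distrib_left sum_divide_distrib sum.swap[of _ "tuples r n"])
  also have "\<dots> = (\<Sum>k<r. \<Sum>s<n. y s ^ r * (msum r n A / n)) / r"
  proof -
    have "(\<Sum>is\<in>tuples r n. A is * y (is ! k) ^ r) = (\<Sum>s<n. y s ^ r * (msum r n A / n))"
      if "k < r" for k
      using sum_tuples_nth[OF that, of A "\<lambda>s. y s ^ r"] slice_sum_regular[OF assms(3) that] by simp
    then show ?thesis by simp
  qed
  also have "\<dots> = msum r n A / n * (\<Sum>s<n. y s ^ r)"
    using assms(1) by (simp add: sum_distrib_left sum_divide_distrib mult.commute)
  finally show ?thesis .
qed

lemma pnorm_eq_1_iff:
  assumes "0 < p"
  shows "pnorm p n x = 1 \<longleftrightarrow> (\<Sum>i<n. \<bar>x i\<bar> powr p) = 1"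
proof -
  have "(\<Sum>i<n. \<bar>x i\<bar> powr p) = pnorm p n x powr p"
    using assms by (simp add: pnorm_def powr_powr sum_nonneg)
  then show ?thesis by (auto simp: pnorm_def)
qed

lemma sum_power_le_of_pnorm_eq_1:
  assumes "1 \<le> r" "real r \<le> p" "pnorm p n x = 1"
  shows "(\<Sum>i<n. \<bar>x i\<bar> ^ r) \<le> real n powr (1 - real r / p)"
proof -
  have p_pos: "0 < p" using assms(1,2) by linarith
  have "(\<bar>x i\<bar> ^ r) powr (p / r) = \<bar>x i\<bar> powr p" for i
    using assms(1) by (simp add: powr_realpow'[symmetric] powr_powr)
  then have "(\<Sum>i<n. (\<bar>x i\<bar> ^ r) powr (p / r)) = 1"
    using assms(3) p_pos by (simp add: pnorm_eq_1_iff)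
  moreover have "1 \<le> p / r" using assms(1,2) by simp
  ultimately show ?thesis
    using sum_le_card_powr_mult_sum_powr[of "{..<n}" "\<lambda>i. \<bar>x i\<bar> ^ r" "p / r"] by simp
qed

lemma abs_form_le_of_pnorm_eq_1:
  assumes "1 \<le> r" "1 \<le> n" "real r \<le> p"
    and "nonneg_matrix r n A" "regular_matrix r n A" "pnorm p n x = 1"
  shows "\<bar>form r n A x\<bar> \<le> real n powr (- real r / p) * msum r n A"
proof -
  have "msum r n A / n \<ge> 0"
    using msum_nonneg[OF assms(4)] by simp
  have "\<bar>form r n A x\<bar> \<le> msum r n A / n * (\<Sum>i<n. \<bar>x i\<bar> ^ r)"
    using abs_form_le_form_abs[OF assms(4), of x]
      form_le_msum_mult_sum_power[OF assms(1,4,5), of "\<lambda>i. \<bar>x i\<bar>"] by simp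
  also have "\<dots> \<le> msum r n A / n * real n powr (1 - real r / p)"
    using \<open>msum r n A / n \<ge> 0\<close> sum_power_le_of_pnorm_eq_1[OF assms(1,3,6)]
    by (rule mult_left_mono[rotated])
  also have "\<dots> = real n powr (- real r / p) * msum r n A"
    using assms(2) by (simp add: powr_diff powr_minus_divide)
  finally show ?thesis .
qed

lemma pnorm_const:
  assumes "0 < p" "1 \<le> n"
  shows "pnorm p n (\<lambda>_. real n powr (-1/p)) = 1"
proof -
  have "(real n powr (-1/p)) powr p = real n powr (-1)"
    using assms by (simp add: powr_powr)
  then have "(real n powr (-1/p)) powr p = 1 / n"
    by (simp add: powr_minus_divide)
  then show ?thesis
    using assms by (simp add: pnorm_eq_1_iff)
qed

lemma form_const: "form r n A (\<lambda>_. c) = c ^ r * msum r n A"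
  by (simp add: form_def msum_def sum_distrib_left mult.commute)

theorem theorem19:
  fixes p :: real and r n :: nat and A :: "nat list \<Rightarrow> real"
  assumes "1 \<le> r" and "1 \<le> n" and "real r \<le> p"
    and "nonneg_matrix r n A" and "symmetric_matrix r n A" and "regular_matrix r n A"
  shows "eta p r n A = real n powr (- real r / p) * msum r n A"
  unfolding eta_def
proof (rule cSup_eq_maximum)
  define c where "c = real n powr (-1/p)"
  have "0 < p" using assms(1,3) by linarith
  have "c ^ r = real n powr (- real r / p)"
    using assms(2) by (simp add: c_def powr_power)
  with msum_nonneg[OF assms(4)]
  have "\<bar>form r n A (\<lambda>_. c)\<bar> = real n powr (- real r / p) * msum r n A"
    by (simp add: form_const)
  then show "real n powr (- real r / p) * msum r n A \<in> {\<bar>form r n A x\<bar> | x. pnorm p n x = 1}"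
    using pnorm_const[OF \<open>0 < p\<close> assms(2)] unfolding c_def by (intro CollectI exI) auto
next
  fix v assume "v \<in> {\<bar>form r n A x\<bar> | x. pnorm p n x = 1}"
  then obtain x where "v = \<bar>form r n A x\<bar>" "pnorm p n x = 1" by blast
  then show "v \<le> real n powr (- real r / p) * msum r n A"
    using abs_form_le_of_pnorm_eq_1[OF assms(1-4,6)] by simp
qed

end
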